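(* Let $\mathbb{X}$ be a finite-dimensional, strictly convex and smooth real Banach space of dimension greater than $1$. Let $\mathcal{F}$ be the class of all norm one operators in $\mathbb{L}(\mathbb{X},\mathbb{X})$ that are smooth points of $\mathbb{L}(\mathbb{X},\mathbb{X})$. Then the pair $(\mathbb{X},\mathbb{X})$ does not have the uniform sBPBp with respect to $\mathcal{F}$.
   Context: $S_{\mathbb{X}}$ is the unit sphere. $\mathbb{X}$ is strictly convex if every point of $S_{\mathbb{X}}$ is an extreme point of the unit ball. A nonzero element $x$ of a Banach space $\mathbb{Z}$ is a smooth point if there is a unique $f\in\mathbb{Z}^*$ with $\|f\|=1$ and $f(x)=\|x\|$; $\mathbb{X}$ is smooth if all its nonzero points are smooth. Given a family $\mathcal{F}$ of norm one operators in $\mathbb{L}(\mathbb{X},\mathbb{Y})$, the pair $(\mathbb{X},\mathbb{Y})$ has uniform sBPBp with respect to $\mathcal{F}$ if for every $\epsilon>0$ there exists $\eta(\epsilon)>0$ such that whenever $T\in\mathcal{F}$ and $x_0\in S_{\mathbb{X}}$ satisfy $\|Tx_0\|>1-\eta(\epsilon)$, there exists $x_1\in S_{\mathbb{X}}$ with $\|Tx_1\|=1$ and $\|x_1-x_0\|<\epsilon$. *)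

theory Defs
  imports "HOL-Analysis.Analysis"
begin

definition smooth_point :: "'a::real_normed_vector \<Rightarrow> bool" where
  "smooth_point x \<longleftrightarrow> x \<noteq> 0 \<and>
     (\<exists>!f :: 'a \<Rightarrow>\<^sub>L real. norm f = 1 \<and> blinfun_apply f x = norm x)"

definition smooth_space :: "'a::real_normed_vector itself \<Rightarrow> bool" where
  "smooth_space _ \<longleftrightarrow> (\<forall>x::'a. x \<noteq> 0 \<longrightarrow> smooth_point x)"

definition strictly_convex_space :: "'a::real_normed_vector itself \<Rightarrow> bool" where
  "strictly_convex_space _ \<longleftrightarrow>
     (\<forall>x::'a \<in> sphere 0 1. x extreme_point_of cball 0 1)"

definition uniform_sBPBp ::
  "('a::real_normed_vector \<Rightarrow>\<^sub>L 'b::real_normed_vector) set \<Rightarrow> bool" where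
  "uniform_sBPBp F \<longleftrightarrow>
     (\<forall>\<epsilon>>0. \<exists>\<eta>>0. \<forall>T\<in>F. \<forall>x0\<in>sphere (0::'a) 1.
        norm (blinfun_apply T x0) > 1 - \<eta> \<longrightarrow>
        (\<exists>x1\<in>sphere 0 1. norm (blinfun_apply T x1) = 1 \<and> norm (x1 - x0) < \<epsilon>))"

end

theory Submission
  imports Defs
begin

(* Fix a unit vector u with its unique support functional \<phi> and, for small b > 0, put
   T = (1 - b) I + b (\<phi> \<otimes> u). Then \<parallel>T\<parallel> = 1 and, by strict convexity, T attains its norm only
   at \<plusminus>u. An operator on a finite-dimensional space that attains its norm only at \<plusminus>u, with T u
   a smooth point, is itself a smooth point of L(X, Y): every norming functional G of T satisfies
   G A \<le> \<phi> (A u), as one sees by differentiating \<parallel>T + t A\<parallel> at t = 0+ and passing to the limit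
   along a subsequence (compactness of the unit sphere and of the dual ball in finite dimensions).
   On the other hand a unit vector x0 in the kernel of \<phi> has \<parallel>T x0\<parallel> = 1 - b, as close to 1 as
   we like, while the only norm-attaining unit vectors \<plusminus>u are at distance at least
   |\<phi> (\<plusminus>u - x0)| = 1 from it. *)

section \<open>Sequential compactness in finite dimensions\<close>

lemma abs_blinfun_apply_le_norm:
  fixes f :: "'a::real_normed_vector \<Rightarrow>\<^sub>L real"
  assumes "norm f \<le> 1"
  shows "\<bar>f x\<bar> \<le> norm x"
  using norm_blinfun[of f x] mult_right_mono[OF assms norm_ge_zero[of x]] by simp

lemma abs_mult_infdist_le_norm_add:
  fixes s y :: "'a::real_normed_vector"
  assumes "subspace V" and "y \<in> V"
  shows "\<bar>c\<bar> * infdist s V \<le> norm (y + c *\<^sub>R s)"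
proof (cases "c = 0")
  case True
  then show ?thesis by simp
next
  case False
  have "- ((1/c) *\<^sub>R y) \<in> V"
    using assms by (simp add: subspace_neg subspace_scale)
  then have "infdist s V \<le> norm (s + (1/c) *\<^sub>R y)"
    using infdist_le by (fastforce simp: dist_norm)
  then have "\<bar>c\<bar> * infdist s V \<le> norm (c *\<^sub>R (s + (1/c) *\<^sub>R y))"
    by (simp add: mult_left_mono)
  also have "c *\<^sub>R (s + (1/c) *\<^sub>R y) = y + c *\<^sub>R s"
    using False by (simp add: algebra_simps)
  finally show ?thesis .
qed

lemma finite_span_bounded_seq_convergent_subseq:
  fixes S :: "'a::real_normed_vector set" and x :: "nat \<Rightarrow> 'a"
  assumes "finite S" and "\<And>n. x n \<in> span S" and "bounded (range x)"
  shows "\<exists>l r. l \<in> span S \<and> strict_mono r \<and> (x \<circ> r) \<longlonglongrightarrow> l"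
  using assms
proof (induction S arbitrary: x rule: finite_induct)
  case empty
  then have "x \<circ> id = (\<lambda>_. 0)" by auto
  then show ?case
    by (metis span_zero strict_mono_id tendsto_const)
next
  case (insert s S)
  show ?case
  proof (cases "s \<in> span S")
    case True
    then show ?thesis
      using insert.IH insert.prems span_redundant by metis
  next
    case False
    have "closed (span S)"
      unfolding closed_sequential_limits
    proof (intro allI impI)
      fix y l assume y: "(\<forall>n. y n \<in> span S) \<and> y \<longlonglongrightarrow> l"
      then obtain l' r where "l' \<in> span S" "strict_mono r" "(y \<circ> r) \<longlonglongrightarrow> l'"
        using insert.IH convergent_imp_bounded by blast
      moreover have "(y \<circ> r) \<longlonglongrightarrow> l"
        using y \<open>strict_mono r\<close> LIMSEQ_subseq_LIMSEQ by blast
      ultimately show "l \<in> span S"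
        using LIMSEQ_unique by metis
    qed
    then have d: "infdist s (span S) > 0"
      using False infdist_pos_not_in_closed span_zero by blast
    obtain M where M: "\<And>n. norm (x n) \<le> M"
      using insert.prems(2) unfolding bounded_iff by blast
    have "\<forall>n. \<exists>k. x n - k *\<^sub>R s \<in> span S"
      using insert.prems(1) span_breakdown_eq by blast
    then obtain c where c: "\<And>n. x n - c n *\<^sub>R s \<in> span S"
      by metis
    have c_bound: "\<bar>c n\<bar> \<le> M / infdist s (span S)" for n
      using abs_mult_infdist_le_norm_add[OF subspace_span c[of n], of "c n" s] M[of n] d
      by (simp add: field_simps)
    then have "bounded (range c)"
      unfolding bounded_iff by auto
    then obtain c0 r1 where r1: "strict_mono r1" "(c \<circ> r1) \<longlonglongrightarrow> c0"
      using bounded_imp_convergent_subsequence by blast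
    define y where "y n = x (r1 n) - c (r1 n) *\<^sub>R s" for n
    have "norm (y n) \<le> M + M / infdist s (span S) * norm s" for n
    proof -
      have "norm (y n) \<le> norm (x (r1 n)) + \<bar>c (r1 n)\<bar> * norm s"
        unfolding y_def by (metis norm_scaleR norm_triangle_ineq4)
      also have "\<dots> \<le> M + M / infdist s (span S) * norm s"
        using M c_bound by (intro add_mono mult_right_mono) auto
      finally show ?thesis .
    qed
    then obtain l r2 where r2: "l \<in> span S" "strict_mono r2" "(y \<circ> r2) \<longlonglongrightarrow> l"
      using insert.IH[of y] c unfolding y_def bounded_iff by blast
    have "(c \<circ> r1 \<circ> r2) \<longlonglongrightarrow> c0"
      using LIMSEQ_subseq_LIMSEQ[OF r1(2) r2(2)] .
    then have "(\<lambda>n. (y \<circ> r2) n + (c \<circ> r1 \<circ> r2) n *\<^sub>R s) \<longlonglongrightarrow> l + c0 *\<^sub>R s"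
      using r2(3) by (intro tendsto_intros)
    moreover have "(\<lambda>n. (y \<circ> r2) n + (c \<circ> r1 \<circ> r2) n *\<^sub>R s) = x \<circ> (r1 \<circ> r2)"
      by (auto simp: y_def)
    moreover have "l + c0 *\<^sub>R s \<in> span (insert s S)"
      unfolding span_breakdown_eq by (rule exI[of _ c0]) (simp add: r2(1))
    ultimately show ?thesis
      using r1 r2 strict_mono_o by metis
  qed
qed

lemma bounded_seqs_common_convergent_subseq:
  fixes f :: "nat \<Rightarrow> 'k \<Rightarrow> real"
  assumes "finite K" and "\<And>k. k \<in> K \<Longrightarrow> bounded (range (\<lambda>n. f n k))"
  shows "\<exists>r. strict_mono r \<and> (\<forall>k\<in>K. convergent (\<lambda>n. f (r n) k))"
  using assms
proof (induction K rule: finite_induct)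
  case empty
  then show ?case using strict_mono_id by blast
next
  case (insert k K)
  then obtain r where r: "strict_mono r" "\<forall>k\<in>K. convergent (\<lambda>n. f (r n) k)"
    by blast
  have "bounded (range (\<lambda>n. f (r n) k))"
    using insert.prems by (rule bounded_subset) auto
  then obtain l r' where r': "strict_mono r'" "((\<lambda>n. f (r n) k) \<circ> r') \<longlonglongrightarrow> l"
    using bounded_imp_convergent_subsequence by blast
  have "convergent (\<lambda>n. f (r (r' n)) k')" if "k' \<in> insert k K" for k'
  proof (cases "k' = k")
    case True
    then show ?thesis using r' by (auto simp: convergent_def o_def)
  next
    case False
    then have "convergent (\<lambda>n. f (r n) k')" using that r by auto
    from convergent_subseq_convergent[OF this r'(1)] show ?thesis by (simp add: o_def)
  qed
  then show ?case
    using r r' strict_mono_o unfolding o_def by blast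
qed

lemma dual_ball_seq_pointwise_convergent_subseq:
  fixes \<psi> :: "nat \<Rightarrow> 'a::real_normed_vector \<Rightarrow>\<^sub>L real" and S :: "'a set"
  assumes "finite S" and "span S = UNIV" and "\<And>n. norm (\<psi> n) \<le> 1"
  shows "\<exists>r (\<psi>\<^sub>0 :: 'a \<Rightarrow>\<^sub>L real). strict_mono r \<and> norm \<psi>\<^sub>0 \<le> 1
    \<and> (\<forall>z. (\<lambda>n. \<psi> (r n) z) \<longlonglongrightarrow> blinfun_apply \<psi>\<^sub>0 z)"
proof -
  have bound: "\<bar>\<psi> n z\<bar> \<le> norm z" for n z
    using abs_blinfun_apply_le_norm[OF assms(3)] .
  then obtain r where r: "strict_mono r" "\<forall>k\<in>S. convergent (\<lambda>n. \<psi> (r n) k)"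
    using bounded_seqs_common_convergent_subseq[OF assms(1), of "\<lambda>n k. \<psi> n k"]
    unfolding bounded_iff by fastforce
  have "convergent (\<lambda>n. \<psi> (r n) z)" for z
  proof -
    have "z \<in> span S" using assms(2) by simp
    then show ?thesis
    proof (rule span_induct)
      show "subspace {z. convergent (\<lambda>n. \<psi> (r n) z)}"
        unfolding subspace_def
        by (auto simp: blinfun.add_right blinfun.scaleR_right convergent_const convergent_def
            intro: tendsto_add tendsto_mult_left)
    qed (use r in auto)
  qed
  then have lim: "(\<lambda>n. \<psi> (r n) z) \<longlonglongrightarrow> lim (\<lambda>n. \<psi> (r n) z)" for z
    using convergent_LIMSEQ_iff by blast
  define g where "g z = lim (\<lambda>n. \<psi> (r n) z)" for z
  have "bounded_linear g"
  proof (rule bounded_linear_intro)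
    show "g (x + y) = g x + g y" for x y
      unfolding g_def using tendsto_add[OF lim[of x] lim[of y]]
      by (simp add: blinfun.add_right limI)
    show "g (c *\<^sub>R x) = c *\<^sub>R g x" for c x
      unfolding g_def using tendsto_mult_left[OF lim[of x], of c]
      by (simp add: blinfun.scaleR_right limI)
    show "norm (g x) \<le> norm x * 1" for x
      unfolding g_def using bound
      by (simp add: LIMSEQ_le_const2[OF tendsto_rabs[OF lim[of x]]])
  qed
  then have "blinfun_apply (Blinfun g) = g"
    by (rule bounded_linear_Blinfun_apply)
  moreover have "norm (Blinfun g) \<le> 1"
    using \<open>bounded_linear g\<close> calculation unfolding g_def
    by (intro norm_blinfun_bound)
      (auto simp: LIMSEQ_le_const2[OF tendsto_rabs[OF lim]] bound)
  ultimately show ?thesis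
    using r(1) lim unfolding g_def by metis
qed

lemma tendsto_blinfun_apply_pointwise:
  fixes \<psi> :: "nat \<Rightarrow> 'a::real_normed_vector \<Rightarrow>\<^sub>L 'b::real_normed_vector"
    and \<psi>\<^sub>0 :: "'a \<Rightarrow>\<^sub>L 'b"
  assumes "\<And>z. (\<lambda>n. \<psi> n z) \<longlonglongrightarrow> \<psi>\<^sub>0 z" and "\<And>n. norm (\<psi> n) \<le> K" and "z \<longlonglongrightarrow> z\<^sub>0"
  shows "(\<lambda>n. \<psi> n (z n)) \<longlonglongrightarrow> \<psi>\<^sub>0 z\<^sub>0"
proof -
  have "(\<lambda>n. \<psi> n (z n - z\<^sub>0)) \<longlonglongrightarrow> 0"
  proof (rule Lim_null_comparison)
    have "norm (\<psi> n (z n - z\<^sub>0)) \<le> K * norm (z n - z\<^sub>0)" for n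
      using norm_blinfun[of "\<psi> n" "z n - z\<^sub>0"]
        mult_right_mono[OF assms(2)[of n] norm_ge_zero[of "z n - z\<^sub>0"]]
      by linarith
    then show "\<forall>\<^sub>F n in sequentially. norm (\<psi> n (z n - z\<^sub>0)) \<le> K * norm (z n - z\<^sub>0)"
      by simp
    show "(\<lambda>n. K * norm (z n - z\<^sub>0)) \<longlonglongrightarrow> 0"
      using assms(3) by (intro tendsto_mult_right_zero) (simp add: LIM_zero_iff tendsto_norm_zero)
  qed
  then have "(\<lambda>n. \<psi> n z\<^sub>0 + \<psi> n (z n - z\<^sub>0)) \<longlonglongrightarrow> \<psi>\<^sub>0 z\<^sub>0 + 0"
    using assms(1) by (rule tendsto_add[rotated])
  then show ?thesis
    by (simp add: blinfun.diff_right)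
qed

lemma finite_dim_unit_and_dual_ball_common_subseq:
  fixes x :: "nat \<Rightarrow> 'a::real_normed_vector"
    and \<psi> :: "nat \<Rightarrow> 'b::real_normed_vector \<Rightarrow>\<^sub>L real"
    and S\<^sub>a :: "'a set" and S\<^sub>b :: "'b set"
  assumes "finite S\<^sub>a" "span S\<^sub>a = UNIV" "finite S\<^sub>b" "span S\<^sub>b = UNIV"
    and "\<And>n. norm (x n) = 1" and "\<And>n. norm (\<psi> n) \<le> 1"
  obtains r l and \<psi>\<^sub>0 :: "'b \<Rightarrow>\<^sub>L real"
  where "strict_mono r" "(\<lambda>n. x (r n)) \<longlonglongrightarrow> l" "norm \<psi>\<^sub>0 \<le> 1"
    "\<And>z. (\<lambda>n. \<psi> (r n) z) \<longlonglongrightarrow> \<psi>\<^sub>0 z"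
proof -
  have "bounded (range x)"
    unfolding bounded_iff using assms(5) by auto
  then obtain l r\<^sub>1 where r\<^sub>1: "strict_mono r\<^sub>1" "(x \<circ> r\<^sub>1) \<longlonglongrightarrow> l"
    using finite_span_bounded_seq_convergent_subseq[OF assms(1)] assms(2) by blast
  obtain r\<^sub>2 and \<psi>\<^sub>0 :: "'b \<Rightarrow>\<^sub>L real"
    where r\<^sub>2: "strict_mono r\<^sub>2" "norm \<psi>\<^sub>0 \<le> 1" "\<And>z. (\<lambda>n. \<psi> (r\<^sub>1 (r\<^sub>2 n)) z) \<longlonglongrightarrow> \<psi>\<^sub>0 z"
    using dual_ball_seq_pointwise_convergent_subseq[OF assms(3,4), of "\<psi> \<circ> r\<^sub>1"] assms(6)
    by auto
  have "(\<lambda>n. x (r\<^sub>1 (r\<^sub>2 n))) \<longlonglongrightarrow> l"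
    using LIMSEQ_subseq_LIMSEQ[OF r\<^sub>1(2) r\<^sub>2(1)] by (simp add: o_def)
  then show ?thesis
    using that[of "r\<^sub>1 \<circ> r\<^sub>2"] strict_mono_o[OF r\<^sub>1(1) r\<^sub>2(1)] r\<^sub>2(2,3) by simp
qed

section \<open>Smooth points of spaces of operators\<close>

lemma strictly_convex_space_support_eq:
  fixes x u :: "'a::real_normed_vector" and \<phi> :: "'a \<Rightarrow>\<^sub>L real"
  assumes "strictly_convex_space TYPE('a)" and "norm \<phi> \<le> 1"
    and "norm x \<le> 1" "\<phi> x = 1" and "norm u \<le> 1" "\<phi> u = 1"
  shows "x = u"
proof (rule ccontr)
  assume "x \<noteq> u"
  then have mid: "midpoint x u \<in> open_segment x u"
    by simp
  have "\<phi> (midpoint x u) = 1"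
    using assms by (simp add: midpoint_def blinfun.scaleR_right blinfun.add_right)
  then have "1 \<le> norm (midpoint x u)"
    using abs_blinfun_apply_le_norm[OF assms(2), of "midpoint x u"] by simp
  moreover have "norm (midpoint x u) \<le> 1"
    using norm_triangle_ineq[of x u] assms(3,5) by (simp add: midpoint_def)
  ultimately have "midpoint x u extreme_point_of cball 0 1"
    using assms(1) unfolding strictly_convex_space_def by simp
  then show False
    using mid assms(3,5) unfolding extreme_point_of_def by (meson mem_cball_0)
qed

lemma smooth_space_support_functional:
  fixes y :: "'a::real_normed_vector"
  assumes "smooth_space TYPE('a)"
  obtains \<psi> :: "'a \<Rightarrow>\<^sub>L real" where "norm \<psi> \<le> 1" "\<psi> y = norm y"
proof (cases "y = 0")
  case True
  then show ?thesis
    by (intro that[of 0]) simp_all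
next
  case False
  then show ?thesis
    using assms that unfolding smooth_space_def smooth_point_def by force
qed

lemma blinfun_nearly_attains_norm:
  fixes B :: "'a::real_normed_vector \<Rightarrow>\<^sub>L 'b::real_normed_vector"
  assumes "norm (u::'a) = 1" and "e > 0"
  obtains x where "norm x = 1" "norm B - e < norm (B x)"
proof -
  have "\<exists>x. norm x = 1 \<and> norm B - e < norm (B x)"
  proof (rule ccontr)
    assume "\<nexists>x. norm x = 1 \<and> norm B - e < norm (B x)"
    then have below: "norm (B x) \<le> norm B - e" if "norm x = 1" for x
      using that by force
    have "norm (B x) \<le> (norm B - e) * norm x" for x
    proof (cases "x = 0")
      case False
      then have "norm (B (x /\<^sub>R norm x)) \<le> norm B - e"
        by (intro below) simp
      with False show ?thesis
        by (simp add: blinfun.scaleR_right divide_simps mult.commute)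
    qed (simp add: blinfun.zero_right)
    moreover have "0 \<le> norm B - e"
      using below[OF assms(1)] norm_ge_zero order_trans by blast
    ultimately have "norm B \<le> norm B - e"
      by (intro norm_blinfun_bound)
    with assms(2) show False
      by simp
  qed
  then show ?thesis
    using that by blast
qed

lemma norming_functional_perturbation:
  fixes T A :: "'a::real_normed_vector \<Rightarrow>\<^sub>L 'b::real_normed_vector"
    and G :: "('a \<Rightarrow>\<^sub>L 'b) \<Rightarrow>\<^sub>L real" and \<phi> :: "'b \<Rightarrow>\<^sub>L real"
  assumes "smooth_space TYPE('b)" and "norm (u::'a) = 1"
    and "norm T \<le> 1" and "norm G \<le> 1" and "G T = 1" and "t > 0"
  obtains x and \<psi> :: "'b \<Rightarrow>\<^sub>L real"
  where "norm x = 1" "0 \<le> \<phi> (T x)" "norm \<psi> \<le> 1"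
    "\<psi> (T x + t *\<^sub>R A x) = norm (T x + t *\<^sub>R A x)"
    "1 + t * G A - t\<^sup>2 < norm (T x + t *\<^sub>R A x)"
    "G A - t < \<psi> (A x)"
proof -
  have "1 + t * G A = G (T + t *\<^sub>R A)"
    using assms(5) by (simp add: blinfun.add_right blinfun.scaleR_right)
  also have "\<dots> \<le> norm (T + t *\<^sub>R A)"
    using abs_blinfun_apply_le_norm[OF assms(4)] abs_le_D1 by blast
  finally have lower: "1 + t * G A \<le> norm (T + t *\<^sub>R A)" .
  have "t\<^sup>2 > 0"
    using assms(6) by simp
  then obtain x where x: "norm x = 1" "norm (T + t *\<^sub>R A) - t\<^sup>2 < norm ((T + t *\<^sub>R A) x)"
    by (rule blinfun_nearly_attains_norm[OF assms(2)])
  define y where "y = T x + t *\<^sub>R A x"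
  obtain \<psi> :: "'b \<Rightarrow>\<^sub>L real" where \<psi>: "norm \<psi> \<le> 1" "\<psi> y = norm y"
    using smooth_space_support_functional[OF assms(1)] .
  have norm_y: "1 + t * G A - t\<^sup>2 < norm y"
    using lower x(2) by (simp add: y_def blinfun.add_left blinfun.scaleR_left)
  have "\<psi> (T x) \<le> norm (T x)"
    using abs_blinfun_apply_le_norm[OF \<psi>(1)] abs_le_D1 by blast
  also have "\<dots> \<le> 1"
    using norm_blinfun[of T x] assms(3) x(1) by simp
  finally have "t * (G A - t) < t * \<psi> (A x)"
    using norm_y \<psi>(2)
    by (simp add: y_def blinfun.add_right blinfun.scaleR_right algebra_simps power2_eq_square)
  then have "G A - t < \<psi> (A x)"
    using assms(6) by simp
  \<comment> \<open>(-x, -\<psi>) works as well; fixing the sign of \<phi> (T x) later singles out u among \<plusminus>u\<close>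
  show ?thesis
  proof (cases "0 \<le> \<phi> (T x)")
    case True
    then show ?thesis
      using that x(1) \<psi> norm_y \<open>G A - t < \<psi> (A x)\<close> unfolding y_def by blast
  next
    case False
    have "T (- x) + t *\<^sub>R A (- x) = - y"
      by (simp add: y_def blinfun.minus_right)
    then show ?thesis
      using that[of "- x" "- \<psi>"] False x(1) \<psi> norm_y \<open>G A - t < \<psi> (A x)\<close>
      by (simp add: blinfun.minus_left blinfun.minus_right)
  qed
qed

lemma norming_sequences_subseq_tendsto:
  fixes T A :: "'a::real_normed_vector \<Rightarrow>\<^sub>L 'b::real_normed_vector"
    and \<phi> :: "'b \<Rightarrow>\<^sub>L real" and \<psi> :: "nat \<Rightarrow> 'b \<Rightarrow>\<^sub>L real"
    and S\<^sub>a :: "'a set" and S\<^sub>b :: "'b set"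
  assumes "finite S\<^sub>a" "span S\<^sub>a = UNIV" "finite S\<^sub>b" "span S\<^sub>b = UNIV"
    and "norm T \<le> 1" and "norm u = 1"
    and attains: "\<And>x. norm x = 1 \<Longrightarrow> norm (T x) = 1 \<Longrightarrow> x = u \<or> x = - u"
    and "norm \<phi> = 1" "\<phi> (T u) = 1"
    and unique: "\<And>\<psi>. norm \<psi> = 1 \<Longrightarrow> blinfun_apply \<psi> (T u) = 1 \<Longrightarrow> \<psi> = \<phi>"
    and "t \<longlonglongrightarrow> 0" and x: "\<And>n. norm (x n) = 1" "\<And>n. 0 \<le> \<phi> (T (x n))"
    and \<psi>: "\<And>n. norm (\<psi> n) \<le> 1"
      "\<And>n. \<psi> n (T (x n) + t n *\<^sub>R A (x n)) = norm (T (x n) + t n *\<^sub>R A (x n))"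
    and lower: "\<And>n. 1 + t n * c - (t n)\<^sup>2 < norm (T (x n) + t n *\<^sub>R A (x n))"
  obtains r where "strict_mono r" "(\<lambda>n. x (r n)) \<longlonglongrightarrow> u" "\<And>z. (\<lambda>n. \<psi> (r n) z) \<longlonglongrightarrow> \<phi> z"
proof -
  have norm_T_le: "norm (T z) \<le> norm z" for z
    using norm_blinfun[of T z] assms(5) by (simp add: mult_left_le_one_le order_trans)
  obtain r l and \<psi>\<^sub>0 :: "'b \<Rightarrow>\<^sub>L real" where r: "strict_mono r" and
    x_lim: "(\<lambda>n. x (r n)) \<longlonglongrightarrow> l" and "norm \<psi>\<^sub>0 \<le> 1" and
    \<psi>_lim: "\<And>z. (\<lambda>n. \<psi> (r n) z) \<longlonglongrightarrow> \<psi>\<^sub>0 z"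
    using finite_dim_unit_and_dual_ball_common_subseq[where x=x and \<psi>=\<psi>, OF assms(1-4) x(1) \<psi>(1)]
    by blast
  have t_lim: "(\<lambda>n. t (r n)) \<longlonglongrightarrow> 0"
    using LIMSEQ_subseq_LIMSEQ[OF \<open>t \<longlonglongrightarrow> 0\<close> r] by (simp add: o_def)
  define y where "y n = T (x n) + t n *\<^sub>R A (x n)" for n
  have y_lim: "(\<lambda>n. y (r n)) \<longlonglongrightarrow> T l"
    using tendsto_add[OF blinfun.tendsto[OF tendsto_const x_lim]
        tendsto_scaleR[OF t_lim blinfun.tendsto[OF tendsto_const x_lim]]]
    by (simp add: y_def)
  have "norm l = 1"
    using tendsto_norm[OF x_lim] x(1) by (simp add: LIMSEQ_const_iff)
  moreover have "1 \<le> norm (T l)"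
  proof (rule LIMSEQ_le[OF _ tendsto_norm[OF y_lim]])
    show "(\<lambda>n. 1 + t (r n) * c - (t (r n))\<^sup>2) \<longlonglongrightarrow> 1"
      using tendsto_intros(1-) t_lim by (auto intro!: tendsto_eq_intros)
    show "\<exists>N. \<forall>n\<ge>N. 1 + t (r n) * c - (t (r n))\<^sup>2 \<le> norm (y (r n))"
      using lower less_imp_le unfolding y_def by blast
  qed
  ultimately have "l = u \<or> l = - u"
    using attains norm_T_le[of l] by simp
  moreover have "0 \<le> \<phi> (T l)"
    using LIMSEQ_le_const[OF blinfun.tendsto[OF tendsto_const blinfun.tendsto[OF tendsto_const x_lim]]]
      x(2) by blast
  moreover have "\<phi> (T (- u)) = - 1"
    using assms(9) by (simp add: blinfun.minus_right)
  ultimately have "l = u"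
    by force
  have "(\<lambda>n. \<psi> (r n) (y (r n))) \<longlonglongrightarrow> \<psi>\<^sub>0 (T l)"
    by (rule tendsto_blinfun_apply_pointwise[OF \<psi>_lim \<psi>(1) y_lim])
  moreover have "(\<lambda>n. \<psi> (r n) (y (r n))) \<longlonglongrightarrow> norm (T l)"
    using tendsto_norm[OF y_lim] by (simp add: y_def \<psi>(2))
  moreover have "norm (T u) = 1"
    using abs_blinfun_apply_le_norm[of \<phi> "T u"] assms(6,8,9) norm_T_le[of u] by simp
  ultimately have "\<psi>\<^sub>0 (T u) = 1" "norm (T u) = 1"
    using LIMSEQ_unique \<open>l = u\<close> by metis+
  then have "\<psi>\<^sub>0 = \<phi>"
    using unique norm_blinfun[of \<psi>\<^sub>0 "T u"] \<open>norm \<psi>\<^sub>0 \<le> 1\<close> by simp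
  then show ?thesis
    using that r x_lim \<psi>_lim \<open>l = u\<close> by blast
qed

lemma norming_functional_le_eval:
  fixes T A :: "'a::real_normed_vector \<Rightarrow>\<^sub>L 'b::real_normed_vector"
    and G :: "('a \<Rightarrow>\<^sub>L 'b) \<Rightarrow>\<^sub>L real" and \<phi> :: "'b \<Rightarrow>\<^sub>L real"
    and S\<^sub>a :: "'a set" and S\<^sub>b :: "'b set"
  assumes "finite S\<^sub>a" "span S\<^sub>a = UNIV" "finite S\<^sub>b" "span S\<^sub>b = UNIV"
    and "smooth_space TYPE('b)" and "norm T \<le> 1" and "norm u = 1"
    and attains: "\<And>x. norm x = 1 \<Longrightarrow> norm (T x) = 1 \<Longrightarrow> x = u \<or> x = - u"
    and "norm \<phi> = 1" "\<phi> (T u) = 1"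
    and unique: "\<And>\<psi>. norm \<psi> = 1 \<Longrightarrow> blinfun_apply \<psi> (T u) = 1 \<Longrightarrow> \<psi> = \<phi>"
    and "norm G \<le> 1" "G T = 1"
  shows "G A \<le> \<phi> (A u)"
proof -
  define t where "t n = inverse (real (Suc n))" for n
  define y where "y x n = T x + t n *\<^sub>R A x" for x n
  have "\<forall>n. \<exists>x (\<psi> :: 'b \<Rightarrow>\<^sub>L real). norm x = 1 \<and> 0 \<le> \<phi> (T x) \<and> norm \<psi> \<le> 1
      \<and> blinfun_apply \<psi> (y x n) = norm (y x n) \<and> 1 + t n * G A - (t n)\<^sup>2 < norm (y x n)
      \<and> G A - t n < blinfun_apply \<psi> (A x)" (is "\<forall>n. ?step n")
  proof
    fix n
    have "t n > 0"
      by (simp add: t_def)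
    then show "?step n"
      by (rule norming_functional_perturbation[OF assms(5,7,6,12,13)]) (unfold y_def, blast)
  qed
  then obtain x and \<psi> :: "nat \<Rightarrow> 'b \<Rightarrow>\<^sub>L real" where
    x: "\<And>n. norm (x n) = 1" "\<And>n. 0 \<le> \<phi> (T (x n))" and
    \<psi>: "\<And>n. norm (\<psi> n) \<le> 1" "\<And>n. \<psi> n (y (x n) n) = norm (y (x n) n)" and
    lower: "\<And>n. 1 + t n * G A - (t n)\<^sup>2 < norm (y (x n) n)" and
    \<psi>_A: "\<And>n. G A - t n < \<psi> n (A (x n))"
    by metis
  have "t \<longlonglongrightarrow> 0"
    using LIMSEQ_inverse_real_of_nat unfolding t_def[abs_def] .
  then obtain r where r: "strict_mono r" and
    x_lim: "(\<lambda>n. x (r n)) \<longlonglongrightarrow> u" and \<psi>_lim: "\<And>z. (\<lambda>n. \<psi> (r n) z) \<longlonglongrightarrow> \<phi> z"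
    using norming_sequences_subseq_tendsto[where x=x and \<psi>=\<psi> and t=t,
        OF assms(1-4,6,7) attains assms(9,10) unique _ x \<psi>(1)]
      \<psi>(2) lower unfolding y_def by blast
  have "(\<lambda>n. \<psi> (r n) (A (x (r n)))) \<longlonglongrightarrow> \<phi> (A u)"
    using tendsto_blinfun_apply_pointwise[OF \<psi>_lim \<psi>(1) blinfun.tendsto[OF tendsto_const x_lim]] .
  moreover have "(\<lambda>n. G A - t (r n)) \<longlonglongrightarrow> G A"
    using tendsto_diff[OF tendsto_const LIMSEQ_subseq_LIMSEQ[OF \<open>t \<longlonglongrightarrow> 0\<close> r]] by (simp add: o_def)
  ultimately show ?thesis
    using \<psi>_A less_imp_le by (intro LIMSEQ_le) blast+
qed

lemma smooth_point_blinfun_if_attains_norm_only_at: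
  fixes T :: "'a::real_normed_vector \<Rightarrow>\<^sub>L 'b::real_normed_vector"
    and S\<^sub>a :: "'a set" and S\<^sub>b :: "'b set"
  assumes "finite S\<^sub>a" "span S\<^sub>a = UNIV" "finite S\<^sub>b" "span S\<^sub>b = UNIV"
    and "smooth_space TYPE('b)" and "norm T = 1" and "norm u = 1" and "norm (T u) = 1"
    and attains: "\<And>x. norm x = 1 \<Longrightarrow> norm (T x) = 1 \<Longrightarrow> x = u \<or> x = - u"
  shows "smooth_point T"
proof -
  have "smooth_point (T u)"
    using assms(5,8) unfolding smooth_space_def by (metis norm_zero zero_neq_one)
  then obtain \<phi> :: "'b \<Rightarrow>\<^sub>L real" where \<phi>: "norm \<phi> = 1" "\<phi> (T u) = 1"
    and unique: "\<And>\<psi>. norm \<psi> = 1 \<Longrightarrow> blinfun_apply \<psi> (T u) = 1 \<Longrightarrow> \<psi> = \<phi>"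
    unfolding smooth_point_def assms(8) by metis
  define E where "E = \<phi> o\<^sub>L blinfun.prod_left u"
  have E: "E A = \<phi> (A u)" for A
    by (simp add: E_def)
  have "norm E \<le> 1"
  proof (rule norm_blinfun_bound)
    show "norm (E A) \<le> 1 * norm A" for A
      using abs_blinfun_apply_le_norm[of \<phi> "A u"] norm_blinfun[of A u] \<phi>(1) assms(7)
      by (simp add: E)
  qed simp
  moreover have "E T = 1"
    by (simp add: E \<phi>)
  ultimately have "norm E = 1"
    using norm_blinfun[of E T] assms(6) by simp
  have "G = E" if "norm G = 1" "G T = norm T" for G :: "('a \<Rightarrow>\<^sub>L 'b) \<Rightarrow>\<^sub>L real"
  proof (rule blinfun_eqI)
    fix A
    have "G B \<le> E B" for B
      unfolding E
      by (rule norming_functional_le_eval[OF assms(1-5) _ assms(7) attains \<phi> unique])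
        (use that assms(6) in simp_all)
    from this[of A] this[of "- A"] show "G A = E A"
      by (simp add: blinfun.minus_right)
  qed
  moreover have "T \<noteq> 0"
    using assms(6) by auto
  ultimately show ?thesis
    unfolding smooth_point_def using \<open>norm E = 1\<close> \<open>E T = 1\<close> assms(6) by (metis (mono_tags))
qed

section \<open>An operator attaining its norm only at a pair of points\<close>

definition proj_blend :: "real \<Rightarrow> 'a::real_normed_vector \<Rightarrow> ('a \<Rightarrow>\<^sub>L real) \<Rightarrow> 'a \<Rightarrow>\<^sub>L 'a"
  where
  "proj_blend b u \<phi> = (1 - b) *\<^sub>R id_blinfun + b *\<^sub>R (blinfun_scaleR_left u o\<^sub>L \<phi>)"

lemma proj_blend_apply: "proj_blend b u \<phi> x = (1 - b) *\<^sub>R x + (b * \<phi> x) *\<^sub>R u"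
  by (simp add: proj_blend_def blinfun.add_left blinfun.scaleR_left)

lemma proj_blend_fixes:
  fixes \<phi> :: "'a::real_normed_vector \<Rightarrow>\<^sub>L real"
  assumes "\<phi> u = 1"
  shows "proj_blend b u \<phi> u = u"
  using assms by (simp add: proj_blend_apply algebra_simps)

lemma norm_proj_blend_apply_le:
  fixes \<phi> :: "'a::real_normed_vector \<Rightarrow>\<^sub>L real"
  assumes "0 \<le> b" "b \<le> 1" and "norm u = 1"
  shows "norm (proj_blend b u \<phi> x) \<le> (1 - b) * norm x + b * \<bar>\<phi> x\<bar>"
  using norm_triangle_ineq[of "(1 - b) *\<^sub>R x" "(b * \<phi> x) *\<^sub>R u"] assms
  by (simp add: proj_blend_apply abs_mult)

lemma norm_proj_blend:
  fixes \<phi> :: "'a::real_normed_vector \<Rightarrow>\<^sub>L real"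
  assumes "0 \<le> b" "b \<le> 1" and "norm u = 1" and "norm \<phi> \<le> 1" and "\<phi> u = 1"
  shows "norm (proj_blend b u \<phi>) = 1"
proof (rule antisym)
  show "norm (proj_blend b u \<phi>) \<le> 1"
  proof (rule norm_blinfun_bound)
    fix x
    have "b * \<bar>\<phi> x\<bar> \<le> b * norm x"
      using abs_blinfun_apply_le_norm[OF assms(4)] assms(1) by (rule mult_left_mono)
    then show "norm (proj_blend b u \<phi> x) \<le> 1 * norm x"
      using norm_proj_blend_apply_le[OF assms(1-3), of \<phi> x] by (simp add: algebra_simps)
  qed simp
  show "1 \<le> norm (proj_blend b u \<phi>)"
    using norm_blinfun[of "proj_blend b u \<phi>" u] proj_blend_fixes[OF assms(5)] assms(3) by simp
qed

lemma proj_blend_attains_norm_only_at: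
  fixes \<phi> :: "'a::real_normed_vector \<Rightarrow>\<^sub>L real"
  assumes "strictly_convex_space TYPE('a)"
    and "0 < b" "b \<le> 1" and "norm u = 1" and "norm \<phi> \<le> 1" and "\<phi> u = 1"
    and "norm x = 1" and "norm (proj_blend b u \<phi> x) = 1"
  shows "x = u \<or> x = - u"
proof -
  have "1 \<le> \<bar>\<phi> x\<bar>"
    using norm_proj_blend_apply_le[of b u \<phi> x] assms(2-4,7,8) by (simp add: algebra_simps)
  then consider "\<phi> x = 1" | "\<phi> (- x) = 1"
    using abs_blinfun_apply_le_norm[OF assms(5), of x] assms(7)
    by (fastforce simp: blinfun.minus_right)
  then show ?thesis
  proof cases
    case 1
    then have "x = u"
      using strictly_convex_space_support_eq[OF assms(1,5) _ _ _ assms(6)] assms(4,7) by simp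
    then show ?thesis ..
  next
    case 2
    then have "- x = u"
      using strictly_convex_space_support_eq[OF assms(1,5) _ _ _ assms(6)] assms(4,7) by simp
    then show ?thesis
      by auto
  qed
qed

lemma smooth_point_proj_blend:
  fixes \<phi> :: "'a::real_normed_vector \<Rightarrow>\<^sub>L real" and S :: "'a set"
  assumes "finite S" "span S = UNIV"
    and "strictly_convex_space TYPE('a)" and "smooth_space TYPE('a)"
    and "0 < b" "b \<le> 1" and "norm u = 1" and "norm \<phi> \<le> 1" and "\<phi> u = 1"
  shows "smooth_point (proj_blend b u \<phi>)"
proof -
  have "norm (proj_blend b u \<phi>) = 1"
    by (rule norm_proj_blend) (use assms(5-9) in auto)
  moreover have "norm (proj_blend b u \<phi> u) = 1"
    by (simp only: proj_blend_fixes[OF assms(9)] assms(7))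
  moreover have "x = u \<or> x = - u" if "norm x = 1" "norm (proj_blend b u \<phi> x) = 1" for x
    by (rule proj_blend_attains_norm_only_at[OF assms(3,5-9) that])
  ultimately show ?thesis
    by (rule smooth_point_blinfun_if_attains_norm_only_at[OF assms(1,2,1,2,4) _ assms(7)])
qed

lemma exists_not_in_span_if_card_less_dim:
  assumes "finite W" and "card W < dim (UNIV :: 'a set)"
  obtains v :: "'a::real_vector" where "v \<notin> span W"
proof -
  have "\<not> UNIV \<subseteq> span W"
    using dim_le_card[of UNIV W] assms by linarith
  then show ?thesis
    using that by blast
qed

lemma exists_unit_vector:
  assumes "dim (UNIV :: 'a set) > 0"
  obtains u :: "'a::real_normed_vector" where "norm u = 1"
proof -
  obtain v :: 'a where "v \<notin> span {}"
    using exists_not_in_span_if_card_less_dim[of "{}"] assms by auto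
  then show ?thesis
    using that[of "v /\<^sub>R norm v"] by simp
qed

lemma exists_unit_in_kernel:
  fixes \<phi> :: "'a::real_normed_vector \<Rightarrow>\<^sub>L real"
  assumes "dim (UNIV :: 'a set) > 1" and "\<phi> u = 1"
  obtains z where "norm z = 1" "\<phi> z = 0"
proof -
  obtain w :: 'a where w: "w \<notin> span {u}"
    using exists_not_in_span_if_card_less_dim[of "{u}"] assms(1) by auto
  define z where "z = w - \<phi> w *\<^sub>R u"
  have "\<phi> z = 0"
    using assms(2) by (simp add: z_def blinfun.diff_right blinfun.scaleR_right)
  moreover have "z \<noteq> 0"
  proof
    assume "z = 0"
    then have "w = \<phi> w *\<^sub>R u"
      by (simp add: z_def)
    with w show False
      by (metis span_base span_scale singletonI)
  qed
  ultimately show ?thesis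
    using that[of "z /\<^sub>R norm z"] by (simp add: blinfun.scaleR_right)
qed

theorem theorem2p10:
  assumes "\<exists>S::'a::banach set. finite S \<and> span S = UNIV"
    and "dim (UNIV :: 'a set) > 1"
    and "strictly_convex_space TYPE('a)"
    and "smooth_space TYPE('a)"
  shows "\<not> uniform_sBPBp {T :: 'a \<Rightarrow>\<^sub>L 'a. norm T = 1 \<and> smooth_point T}"
proof
  assume "uniform_sBPBp {T :: 'a \<Rightarrow>\<^sub>L 'a. norm T = 1 \<and> smooth_point T}"
  then obtain \<eta> where "\<eta> > 0" and sBPBp: "\<forall>T\<in>{T :: 'a \<Rightarrow>\<^sub>L 'a. norm T = 1 \<and> smooth_point T}.
      \<forall>x\<^sub>0\<in>sphere 0 1. 1 - \<eta> < norm (blinfun_apply T x\<^sub>0) \<longrightarrow>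
        (\<exists>x\<^sub>1\<in>sphere 0 1. norm (blinfun_apply T x\<^sub>1) = 1 \<and> norm (x\<^sub>1 - x\<^sub>0) < 1)"
    unfolding uniform_sBPBp_def using zero_less_one by blast
  obtain S :: "'a set" where S: "finite S" "span S = UNIV"
    using assms(1) by blast
  obtain u :: 'a where u: "norm u = 1"
    using exists_unit_vector assms(2) by (metis gr_zeroI not_one_less_zero)
  obtain \<phi> :: "'a \<Rightarrow>\<^sub>L real" where \<phi>: "norm \<phi> \<le> 1" "\<phi> u = 1"
    using smooth_space_support_functional[OF assms(4), of u] u by metis
  obtain x\<^sub>0 where x\<^sub>0: "norm x\<^sub>0 = 1" "\<phi> x\<^sub>0 = 0"
    using exists_unit_in_kernel[OF assms(2) \<phi>(2)] .
  define b where "b = min (1/2) (\<eta>/2)"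
  have b: "0 < b" "b \<le> 1" "b < \<eta>"
    unfolding b_def using \<open>\<eta> > 0\<close> by auto
  define T where "T = proj_blend b u \<phi>"
  have "T \<in> {T. norm T = 1 \<and> smooth_point T}"
    using norm_proj_blend[OF less_imp_le[OF b(1)] b(2) u \<phi>]
      smooth_point_proj_blend[OF S assms(3,4) b(1,2) u \<phi>]
    unfolding T_def by simp
  moreover have "x\<^sub>0 \<in> sphere 0 1" "1 - \<eta> < norm (T x\<^sub>0)"
    using x\<^sub>0 b by (simp_all add: T_def proj_blend_apply)
  ultimately obtain x\<^sub>1 where x\<^sub>1: "norm x\<^sub>1 = 1" "norm (T x\<^sub>1) = 1" "norm (x\<^sub>1 - x\<^sub>0) < 1"
    using sBPBp by fastforce
  then have "x\<^sub>1 = u \<or> x\<^sub>1 = - u"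
    using proj_blend_attains_norm_only_at[OF assms(3) b(1,2) u \<phi>] unfolding T_def by blast
  then have "\<bar>\<phi> (x\<^sub>1 - x\<^sub>0)\<bar> = 1"
    using \<phi>(2) x\<^sub>0(2) by (auto simp: blinfun.diff_right blinfun.minus_right)
  then show False
    using abs_blinfun_apply_le_norm[OF \<phi>(1), of "x\<^sub>1 - x\<^sub>0"] x\<^sub>1(3) by simp
qed
end
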